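(* Let $H$ be a Hopf algebra over a field $\mathbb{k}$ containing a subalgebra $P$ which is either a polynomial algebra $\mathbb{k}[x]$ or a Laurent polynomial algebra $\mathbb{k}[x^{\pm1}]$ in some element $x$, such that $H$ is finitely generated as a right $P$-module. Then a left ideal $I$ of $H$ has finite codimension in $H$ if and only if $I\cap P\ne0$. *)

theory Defs
  imports Main "HOL.Vector_Spaces"
begin

definition k_algebra :: "('k::field \<Rightarrow> 'h::ring_1 \<Rightarrow> 'h) \<Rightarrow> bool" where
  "k_algebra scale \<longleftrightarrow> vector_space scale \<and>
     (\<forall>c a b. scale c (a * b) = scale c a * b \<and> scale c (a * b) = a * scale c b)"

definition k_lin :: "('k::field \<Rightarrow> 'h::ring_1 \<Rightarrow> 'h) \<Rightarrow> ('h \<Rightarrow> 'k) \<Rightarrow> bool" where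
  "k_lin scale f \<longleftrightarrow> (\<forall>a b. f (a + b) = f a + f b) \<and> (\<forall>c a. f (scale c a) = c * f a)"

definition k_lin_endo :: "('k::field \<Rightarrow> 'h::ring_1 \<Rightarrow> 'h) \<Rightarrow> ('h \<Rightarrow> 'h) \<Rightarrow> bool" where
  "k_lin_endo scale f \<longleftrightarrow> (\<forall>a b. f (a + b) = f a + f b) \<and> (\<forall>c a. f (scale c a) = scale c (f a))"

text \<open>Elements of H \<otimes> H are represented by finite lists of simple tensors; two such lists
  denote the same tensor iff every bilinear form H \<times> H \<rightarrow> k takes the same value on them
  (over a field, bilinear forms separate the points of H \<otimes> H).\<close>
definition bilin_form :: "('k::field \<Rightarrow> 'h::ring_1 \<Rightarrow> 'h) \<Rightarrow> ('h \<Rightarrow> 'h \<Rightarrow> 'k) \<Rightarrow> bool" where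
  "bilin_form scale \<beta> \<longleftrightarrow> (\<forall>a. k_lin scale (\<beta> a)) \<and> (\<forall>b. k_lin scale (\<lambda>a. \<beta> a b))"

definition trilin_form :: "('k::field \<Rightarrow> 'h::ring_1 \<Rightarrow> 'h) \<Rightarrow> ('h \<Rightarrow> 'h \<Rightarrow> 'h \<Rightarrow> 'k) \<Rightarrow> bool" where
  "trilin_form scale \<tau> \<longleftrightarrow> (\<forall>a b. k_lin scale (\<tau> a b)) \<and> (\<forall>a c. k_lin scale (\<lambda>b. \<tau> a b c))
      \<and> (\<forall>b c. k_lin scale (\<lambda>a. \<tau> a b c))"

definition tens2_eq :: "('k::field \<Rightarrow> 'h::ring_1 \<Rightarrow> 'h) \<Rightarrow> ('h \<times> 'h) list \<Rightarrow> ('h \<times> 'h) list \<Rightarrow> bool" where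
  "tens2_eq scale xs ys \<longleftrightarrow> (\<forall>\<beta>. bilin_form scale \<beta> \<longrightarrow>
      sum_list (map (\<lambda>(a, b). \<beta> a b) xs) = sum_list (map (\<lambda>(a, b). \<beta> a b) ys))"

definition tens3_eq :: "('k::field \<Rightarrow> 'h::ring_1 \<Rightarrow> 'h) \<Rightarrow> ('h \<times> 'h \<times> 'h) list \<Rightarrow> ('h \<times> 'h \<times> 'h) list \<Rightarrow> bool" where
  "tens3_eq scale xs ys \<longleftrightarrow> (\<forall>\<tau>. trilin_form scale \<tau> \<longrightarrow>
      sum_list (map (\<lambda>(a, b, c). \<tau> a b c) xs) = sum_list (map (\<lambda>(a, b, c). \<tau> a b c) ys))"

definition hopf_algebra :: "('k::field \<Rightarrow> 'h::ring_1 \<Rightarrow> 'h) \<Rightarrow> ('h \<Rightarrow> ('h \<times> 'h) list)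
    \<Rightarrow> ('h \<Rightarrow> 'k) \<Rightarrow> ('h \<Rightarrow> 'h) \<Rightarrow> bool" where
  "hopf_algebra scale \<Delta> \<epsilon> S \<longleftrightarrow> k_algebra scale \<and>
     \<comment> \<open>\<Delta> is k-linear\<close>
     (\<forall>a b. tens2_eq scale (\<Delta> (a + b)) (\<Delta> a @ \<Delta> b)) \<and>
     (\<forall>c a. tens2_eq scale (\<Delta> (scale c a)) (map (\<lambda>(u, v). (scale c u, v)) (\<Delta> a))) \<and>
     \<comment> \<open>\<Delta> is an algebra map\<close>
     (\<forall>a b. tens2_eq scale (\<Delta> (a * b)) [(u * u', v * v'). (u, v) \<leftarrow> \<Delta> a, (u', v') \<leftarrow> \<Delta> b]) \<and>
     tens2_eq scale (\<Delta> 1) [(1, 1)] \<and>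
     \<comment> \<open>coassociativity\<close>
     (\<forall>a. tens3_eq scale
        (concat (map (\<lambda>(a1, a2). map (\<lambda>(u, v). (u, v, a2)) (\<Delta> a1)) (\<Delta> a)))
        (concat (map (\<lambda>(a1, a2). map (\<lambda>(u, v). (a1, u, v)) (\<Delta> a2)) (\<Delta> a)))) \<and>
     \<comment> \<open>counit: an algebra map H \<rightarrow> k satisfying the counit axioms\<close>
     k_lin scale \<epsilon> \<and> (\<forall>a b. \<epsilon> (a * b) = \<epsilon> a * \<epsilon> b) \<and> \<epsilon> 1 = 1 \<and>
     (\<forall>a. sum_list (map (\<lambda>(u, v). scale (\<epsilon> u) v) (\<Delta> a)) = a) \<and>
     (\<forall>a. sum_list (map (\<lambda>(u, v). scale (\<epsilon> v) u) (\<Delta> a)) = a) \<and>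
     \<comment> \<open>antipode\<close>
     k_lin_endo scale S \<and>
     (\<forall>a. sum_list (map (\<lambda>(u, v). S u * v) (\<Delta> a)) = scale (\<epsilon> a) 1) \<and>
     (\<forall>a. sum_list (map (\<lambda>(u, v). u * S v) (\<Delta> a)) = scale (\<epsilon> a) 1)"

definition is_poly_subalg :: "('k::field \<Rightarrow> 'h::ring_1 \<Rightarrow> 'h) \<Rightarrow> 'h set \<Rightarrow> 'h \<Rightarrow> bool" where
  "is_poly_subalg scale P x \<longleftrightarrow> inj (\<lambda>n::nat. x ^ n) \<and>
     \<not> module.dependent scale (range (\<lambda>n::nat. x ^ n)) \<and>
     P = module.span scale (range (\<lambda>n::nat. x ^ n))"

definition zpow :: "'h::ring_1 \<Rightarrow> 'h \<Rightarrow> int \<Rightarrow> 'h" where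
  "zpow x y i = (if 0 \<le> i then x ^ nat i else y ^ nat (- i))"

definition is_laurent_subalg :: "('k::field \<Rightarrow> 'h::ring_1 \<Rightarrow> 'h) \<Rightarrow> 'h set \<Rightarrow> 'h \<Rightarrow> bool" where
  "is_laurent_subalg scale P x \<longleftrightarrow> (\<exists>y. x * y = 1 \<and> y * x = 1 \<and>
     inj (zpow x y) \<and>
     \<not> module.dependent scale (range (zpow x y)) \<and>
     P = module.span scale (range (zpow x y)))"

definition fg_right_module :: "'h::ring_1 set \<Rightarrow> bool" where
  "fg_right_module P \<longleftrightarrow> (\<exists>G. finite G \<and>
     (\<forall>h. \<exists>p. (\<forall>g\<in>G. p g \<in> P) \<and> h = (\<Sum>g\<in>G. g * p g)))"

definition left_ideal :: "('k::field \<Rightarrow> 'h::ring_1 \<Rightarrow> 'h) \<Rightarrow> 'h set \<Rightarrow> bool" where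
  "left_ideal scale I \<longleftrightarrow> 0 \<in> I \<and> (\<forall>a\<in>I. \<forall>b\<in>I. a + b \<in> I) \<and>
     (\<forall>c. \<forall>a\<in>I. scale c a \<in> I) \<and> (\<forall>h. \<forall>a\<in>I. h * a \<in> I)"

definition finite_codim :: "('k::field \<Rightarrow> 'h::ring_1 \<Rightarrow> 'h) \<Rightarrow> 'h set \<Rightarrow> bool" where
  "finite_codim scale I \<longleftrightarrow> (\<exists>F. finite F \<and> (\<forall>h. \<exists>g\<in>module.span scale F. h - g \<in> I))"

end

theory Submission
  imports Defs
begin

text \<open>Only the algebra structure of H enters.
  If I has finite codimension, the infinitely many independent powers of x cannot stay
  independent modulo I, so some nonzero element of their span, which lies in P, belongs to I.
  Conversely, let 0 \<noteq> f \<in> I \<inter> P. After multiplication by a power of x (needed only in the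
  Laurent case) f is a polynomial c_0 + ... + c_d x^d \<in> I with c_d \<noteq> 0. Multiplying it by
  g x^(n-d) shows that g x^n is congruent modulo I to a combination of g x^(n-d), ...,
  g x^(n-1), so every g x^n lies in span {g x^j | j < d} + I. For Laurent polynomials the
  same argument with y = x^-1 in place of x handles the negative powers. Letting g run
  over finitely many generators of H as a right P-module gives H = span F + I, F finite.\<close>

lemma zpow_swap: "zpow y x i = zpow x y (- i)"
  by (simp add: zpow_def)

locale ring_vector_space = vector_space scale
  for scale :: "'k::field \<Rightarrow> 'h::ring_1 \<Rightarrow> 'h" (infixr \<open>*s\<close> 75) +
  assumes scale_right_mult: "c *s (a * b) = a * (c *s b)"
begin

lemma left_mult_span_subspace:
  assumes "subspace T" "\<And>s. s \<in> S \<Longrightarrow> a * s \<in> T" "p \<in> span S"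
  shows "a * p \<in> T"
proof -
  have "subspace {p. a * p \<in> T}"
    using \<open>subspace T\<close> unfolding subspace_def
    by (auto simp: distrib_left scale_right_mult[symmetric])
  then show ?thesis
    using span_minimal[of S "{p. a * p \<in> T}"] assms by auto
qed

lemma span_powers_sum:
  assumes "f \<in> span (range (\<lambda>n. x ^ n))"
  shows "\<exists>d c. f = (\<Sum>j\<le>d. c j *s x ^ j)"
  using assms
proof (induction rule: span_induct_alt)
  case base
  show ?case by (intro exI[of _ 0] exI[of _ "\<lambda>_. 0"]) simp
next
  case (step a v f)
  then obtain n c d where v: "v = x ^ n" and f: "f = (\<Sum>j\<le>d. c j *s x ^ j)" by blast
  define c' where "c' j = (if j = n then a else 0) + (if j \<le> d then c j else 0)" for j
  have "{..max n d} \<inter> {j. j \<le> d} = {..d}" by auto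
  then have "(\<Sum>j\<le>max n d. c' j *s x ^ j) = a *s v + f"
    unfolding c'_def v f
    by (simp add: scale_left_distrib sum.distrib if_distrib[of "\<lambda>c. c *s _"] sum.If_cases)
  then show ?case by (intro exI) (rule sym)
qed

lemma span_powers_leading_coeff:
  assumes "f \<in> span (range (\<lambda>n. x ^ n))" "f \<noteq> 0"
  shows "\<exists>c d. f = (\<Sum>j\<le>d. c j *s x ^ j) \<and> c d \<noteq> 0"
proof -
  define d where "d = (LEAST d. \<exists>c. f = (\<Sum>j\<le>d. c j *s x ^ j))"
  obtain c where c: "f = (\<Sum>j\<le>d. c j *s x ^ j)"
    using LeastI_ex[OF span_powers_sum[OF assms(1)], folded d_def] by blast
  have "c d \<noteq> 0"
  proof
    assume "c d = 0"
    show False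
    proof (cases d)
      case 0
      then show False using c \<open>c d = 0\<close> assms(2) by simp
    next
      case (Suc d')
      then have "\<exists>c. f = (\<Sum>j\<le>d'. c j *s x ^ j)" using c \<open>c d = 0\<close> by auto
      then have "d \<le> d'" unfolding d_def by (rule Least_le)
      then show False using Suc by simp
    qed
  qed
  then show ?thesis using c by blast
qed

lemma power_mult_span_powers:
  assumes "p \<in> span (range (\<lambda>n. x ^ n))"
  shows "x ^ k * p \<in> span (range (\<lambda>n. x ^ n))"
  by (rule left_mult_span_subspace[OF subspace_span _ assms])
    (auto simp: power_add[symmetric] intro: span_base)

lemma span_zpow_shift_to_powers:
  assumes "x * y = 1" "f \<in> span (range (zpow x y))"
  shows "\<exists>a. x ^ a * f \<in> span (range (\<lambda>n. x ^ n))"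
  using assms(2)
proof (induction rule: span_induct_alt)
  case base
  show ?case by (auto intro: span_zero)
next
  case (step c z g)
  then obtain i a where z: "z = zpow x y i" and g: "x ^ a * g \<in> span (range (\<lambda>n. x ^ n))"
    by blast
  have "x ^ nat (- i) * z \<in> range (\<lambda>n. x ^ n)"
    using left_right_inverse_power[OF assms(1)] unfolding z zpow_def
    by (auto intro: range_eqI[of _ _ 0])
  then have "x ^ (a + nat (- i)) * z \<in> span (range (\<lambda>n. x ^ n))"
    using power_mult_span_powers[OF span_base, of _ _ a] by (simp add: power_add mult.assoc)
  moreover have "x ^ (a + nat (- i)) * g \<in> span (range (\<lambda>n. x ^ n))"
    using power_mult_span_powers[OF g, of "nat (- i)"]
    by (simp add: power_add[symmetric] mult.assoc[symmetric] add.commute)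
  ultimately have "x ^ (a + nat (- i)) * (c *s z + g) \<in> span (range (\<lambda>n. x ^ n))"
    by (simp add: distrib_left scale_right_mult[symmetric] span_add span_scale)
  then show ?case by (rule exI)
qed

lemma independent_powers_in_subalg:
  assumes "is_poly_subalg scale P x \<or> is_laurent_subalg scale P x"
  shows "inj (\<lambda>n::nat. x ^ n) \<and> independent (range (\<lambda>n::nat. x ^ n))
    \<and> span (range (\<lambda>n::nat. x ^ n)) \<subseteq> P"
  using assms
proof
  assume "is_poly_subalg scale P x"
  then show ?thesis unfolding is_poly_subalg_def by blast
next
  assume "is_laurent_subalg scale P x"
  then obtain y where y: "inj (zpow x y)" "independent (range (zpow x y))"
    "P = span (range (zpow x y))"
    unfolding is_laurent_subalg_def by blast
  have powers: "(\<lambda>n::nat. x ^ n) = zpow x y \<circ> int"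
    by (simp add: zpow_def comp_def)
  have "range (\<lambda>n::nat. x ^ n) \<subseteq> range (zpow x y)"
    unfolding powers by auto
  moreover have "inj (zpow x y \<circ> int)"
    using y(1) inj_of_nat by (rule inj_compose)
  ultimately show ?thesis
    using y independent_mono span_mono unfolding powers by metis
qed

end

locale ring_vector_space_ideal = ring_vector_space scale
  for scale :: "'k::field \<Rightarrow> 'h::ring_1 \<Rightarrow> 'h" (infixr \<open>*s\<close> 75) +
  fixes I :: "'h set"
  assumes left_ideal: "left_ideal scale I"
begin

lemma subspace_ideal: "subspace I"
  using left_ideal unfolding left_ideal_def subspace_def by auto

lemma ideal_left_mult: "a \<in> I \<Longrightarrow> h * a \<in> I"
  using left_ideal unfolding left_ideal_def by auto

definition span_plus_ideal :: "'h set \<Rightarrow> 'h set" where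
  "span_plus_ideal F = {h. \<exists>g\<in>span F. h - g \<in> I}"

lemma subspace_span_plus_ideal: "subspace (span_plus_ideal F)"
proof (rule subspaceI)
  show "0 \<in> span_plus_ideal F"
    unfolding span_plus_ideal_def using subspace_0[OF subspace_ideal] span_zero by force
next
  fix a b assume "a \<in> span_plus_ideal F" "b \<in> span_plus_ideal F"
  then obtain g1 g2 where "g1 \<in> span F" "a - g1 \<in> I" "g2 \<in> span F" "b - g2 \<in> I"
    unfolding span_plus_ideal_def by auto
  then show "a + b \<in> span_plus_ideal F"
    unfolding span_plus_ideal_def
    by (intro CollectI bexI[of _ "g1 + g2"])
      (auto intro: span_add dest: subspace_add[OF subspace_ideal] simp: algebra_simps)
next
  fix c a assume "a \<in> span_plus_ideal F"
  then obtain g where "g \<in> span F" "a - g \<in> I"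
    unfolding span_plus_ideal_def by auto
  then show "c *s a \<in> span_plus_ideal F"
    unfolding span_plus_ideal_def
    by (intro CollectI bexI[of _ "c *s g"])
      (auto intro: span_scale dest: subspace_scale[OF subspace_ideal]
        simp: scale_right_diff_distrib[symmetric])
qed

lemma span_plus_ideal_mono: "F \<subseteq> F' \<Longrightarrow> span_plus_ideal F \<subseteq> span_plus_ideal F'"
  unfolding span_plus_ideal_def using span_mono by blast

lemma base_in_span_plus_ideal: "a \<in> F \<Longrightarrow> a \<in> span_plus_ideal F"
  unfolding span_plus_ideal_def using subspace_0[OF subspace_ideal] span_base by force

lemma ideal_in_span_plus_ideal: "a \<in> I \<Longrightarrow> a \<in> span_plus_ideal F"
  unfolding span_plus_ideal_def using span_zero by force

lemma finite_codim_iff: "finite_codim scale I \<longleftrightarrow> (\<exists>F. finite F \<and> span_plus_ideal F = UNIV)"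
  unfolding finite_codim_def span_plus_ideal_def by blast

lemma independent_image_mod_ideal:
  assumes M: "independent M" "span M \<inter> I \<subseteq> {0}" and r: "\<And>h. h - r h \<in> I"
  shows "inj_on r M \<and> independent (r ` M)"
proof
  have zero: "v = 0" if "v \<in> span M" "v \<in> I" for v
    using M(2) that by blast
  have indep: "\<forall>v\<in>T. c v = 0" if "T \<subseteq> M" "finite T" "(\<Sum>v\<in>T. c v *s v) = 0" for T c
    using M(1) that unfolding independent_explicit_finite_subsets by blast
  show inj: "inj_on r M"
  proof (rule inj_onI)
    fix m1 m2 assume m: "m1 \<in> M" "m2 \<in> M" "r m1 = r m2"
    have "(m1 - r m1) - (m2 - r m2) \<in> I"
      by (rule subspace_diff[OF subspace_ideal r r])
    then have "m1 - m2 \<in> I" using m(3) by simp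
    then show "m1 = m2" using zero[of "m1 - m2"] m by (simp add: span_diff span_base)
  qed
  show "independent (r ` M)"
    unfolding independent_explicit_finite_subsets
  proof (intro allI impI ballI)
    fix S u v assume S: "S \<subseteq> r ` M" "finite S" and sum0: "(\<Sum>v\<in>S. u v *s v) = 0" and "v \<in> S"
    then obtain T where T: "T \<subseteq> M" "S = r ` T" by (auto simp: subset_image_iff)
    have inj_T: "inj_on r T" using inj_on_subset[OF inj T(1)] .
    then have "finite T" using S(2) T(2) finite_imageD by blast
    define w where "w = (\<Sum>m\<in>T. u (r m) *s m)"
    have "w = w - (\<Sum>m\<in>T. u (r m) *s r m)"
      using sum0 unfolding T(2) sum.reindex[OF inj_T] by simp
    also have "\<dots> = (\<Sum>m\<in>T. u (r m) *s (m - r m))"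
      unfolding w_def by (simp add: sum_subtractf[symmetric] scale_right_diff_distrib)
    finally have "w \<in> I"
      by (simp add: subspace_sum[OF subspace_ideal] subspace_scale[OF subspace_ideal] r)
    moreover have "w \<in> span M"
      unfolding w_def using T(1) by (intro span_sum span_scale) (auto intro: span_base)
    ultimately have "w = 0" by (rule zero[rotated])
    then have "\<forall>m\<in>T. u (r m) = 0"
      unfolding w_def by (rule indep[OF T(1) \<open>finite T\<close>])
    then show "u v = 0" using \<open>v \<in> S\<close> T(2) by blast
  qed
qed

lemma independent_card_le_codim:
  assumes F: "finite F" "span_plus_ideal F = UNIV"
    and M: "independent M" "span M \<inter> I \<subseteq> {0}"
  shows "finite M \<and> card M \<le> card F"
proof -
  have "\<forall>h. \<exists>g. g \<in> span F \<and> h - g \<in> I"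
    using F(2) unfolding span_plus_ideal_def by blast
  then obtain r where r: "\<And>h. r h \<in> span F" "\<And>h. h - r h \<in> I"
    by (metis choice)
  have inj: "inj_on r M" and "independent (r ` M)"
    using independent_image_mod_ideal[OF M r(2)] by auto
  moreover have "r ` M \<subseteq> span F" using r(1) by blast
  ultimately have "finite (r ` M) \<and> card (r ` M) \<le> card F"
    using independent_span_bound[OF F(1)] by blast
  then show ?thesis using inj by (simp add: finite_image_iff card_image)
qed

lemma power_mult_in_span_plus_ideal:
  assumes f: "(\<Sum>j\<le>d. c j *s x ^ j) \<in> I" and lead: "c d \<noteq> 0"
  shows "g * x ^ n \<in> span_plus_ideal ((\<lambda>j. g * x ^ j) ` {..<d})"
    (is "_ \<in> ?T")
proof (induction n rule: less_induct)
  case (less n)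
  show ?case
  proof (cases "n < d")
    case True
    then show ?thesis by (intro base_in_span_plus_ideal) auto
  next
    case False
    then obtain m where n: "n = m + d" by (metis add.commute le_Suc_ex not_less)
    have "{..d} = insert d {..<d}" by auto
    then have "g * x ^ m * (\<Sum>j\<le>d. c j *s x ^ j)
        = c d *s (g * x ^ n) + (\<Sum>j<d. c j *s (g * x ^ (m + j)))"
      by (simp add: n distrib_left sum_distrib_left scale_right_mult[symmetric]
          power_add mult.assoc)
    moreover have "g * x ^ m * (\<Sum>j\<le>d. c j *s x ^ j) \<in> ?T"
      using f by (intro ideal_in_span_plus_ideal ideal_left_mult)
    moreover have "(\<Sum>j<d. c j *s (g * x ^ (m + j))) \<in> ?T"
      using less.IH n
      by (intro subspace_sum[OF subspace_span_plus_ideal]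
          subspace_scale[OF subspace_span_plus_ideal]) auto
    ultimately have "c d *s (g * x ^ n) \<in> ?T"
      using subspace_diff[OF subspace_span_plus_ideal] by fastforce
    then have "inverse (c d) *s c d *s (g * x ^ n) \<in> ?T"
      by (rule subspace_scale[OF subspace_span_plus_ideal])
    then show ?thesis using lead by simp
  qed
qed

lemma powers_mult_in_span_plus_ideal_finite:
  assumes "f \<in> I" "f \<in> span (range (\<lambda>n. x ^ n))" "f \<noteq> 0"
  shows "\<exists>F. finite F \<and> (\<forall>n. g * x ^ n \<in> span_plus_ideal F)"
proof -
  obtain c d where "f = (\<Sum>j\<le>d. c j *s x ^ j)" "c d \<noteq> 0"
    using span_powers_leading_coeff[OF assms(2,3)] by blast
  then show ?thesis
    using power_mult_in_span_plus_ideal assms(1) by blast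
qed

lemma finite_codim_if_mult_span:
  assumes "fg_right_module P" "P \<subseteq> span B"
    and mult: "\<And>g. \<exists>F. finite F \<and> (\<forall>b\<in>B. g * b \<in> span_plus_ideal F)"
  shows "finite_codim scale I"
proof -
  obtain G where G: "finite G" "\<And>h. \<exists>p. (\<forall>g\<in>G. p g \<in> P) \<and> h = (\<Sum>g\<in>G. g * p g)"
    using assms(1) unfolding fg_right_module_def by blast
  obtain Fg where Fg: "\<And>g. finite (Fg g)" "\<And>g b. b \<in> B \<Longrightarrow> g * b \<in> span_plus_ideal (Fg g)"
    using mult by metis
  define F where "F = (\<Union>g\<in>G. Fg g)"
  have "h \<in> span_plus_ideal F" for h
  proof -
    obtain p where p: "\<forall>g\<in>G. p g \<in> P" "h = (\<Sum>g\<in>G. g * p g)" using G(2) by blast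
    have "g * p g \<in> span_plus_ideal F" if "g \<in> G" for g
    proof (rule left_mult_span_subspace[OF subspace_span_plus_ideal])
      show "g * b \<in> span_plus_ideal F" if "b \<in> B" for b
        using Fg(2)[OF that] span_plus_ideal_mono[of "Fg g" F] \<open>g \<in> G\<close>
        unfolding F_def by blast
      show "p g \<in> span B" using p(1) assms(2) \<open>g \<in> G\<close> by blast
    qed
    then show ?thesis
      unfolding p(2) by (rule subspace_sum[OF subspace_span_plus_ideal])
  qed
  moreover have "finite F" unfolding F_def using G(1) Fg(1) by blast
  ultimately show ?thesis unfolding finite_codim_iff by blast
qed

lemma finite_codim_if_poly_subalg:
  assumes "is_poly_subalg scale P x" "fg_right_module P" "I \<inter> P \<noteq> {0}"
  shows "finite_codim scale I"
proof -
  have P: "P = span (range (\<lambda>n. x ^ n))"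
    using assms(1) unfolding is_poly_subalg_def by blast
  have "0 \<in> I \<inter> P" using subspace_0[OF subspace_ideal] span_zero P by blast
  then obtain f where f: "f \<in> I" "f \<in> span (range (\<lambda>n. x ^ n))" "f \<noteq> 0"
    using assms(3) P by blast
  have "\<exists>F. finite F \<and> (\<forall>b\<in>range (\<lambda>n. x ^ n). g * b \<in> span_plus_ideal F)" for g
    using powers_mult_in_span_plus_ideal_finite[OF f] by auto
  then show ?thesis by (rule finite_codim_if_mult_span[OF assms(2) equalityD1[OF P]])
qed

lemma finite_codim_if_laurent_subalg:
  assumes "is_laurent_subalg scale P x" "fg_right_module P" "I \<inter> P \<noteq> {0}"
  shows "finite_codim scale I"
proof -
  obtain y where xy: "x * y = 1" "y * x = 1" and P: "P = span (range (zpow x y))"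
    using assms(1) unfolding is_laurent_subalg_def by blast
  have "range (zpow y x) = range (zpow x y)"
    unfolding zpow_swap[of y x] using image_image[of "zpow x y" uminus UNIV] surj_uminus by metis
  then have P': "P = span (range (zpow y x))"
    unfolding P by simp
  have "0 \<in> I \<inter> P" using subspace_0[OF subspace_ideal] span_zero P by blast
  then obtain f where f: "f \<in> I" "f \<in> P" "f \<noteq> 0"
    using assms(3) by blast
  obtain a where a: "x ^ a * f \<in> span (range (\<lambda>n. x ^ n))"
    using span_zpow_shift_to_powers[OF xy(1)] f(2) unfolding P by blast
  obtain b where b: "y ^ b * f \<in> span (range (\<lambda>n. y ^ n))"
    using span_zpow_shift_to_powers[OF xy(2)] f(2) unfolding P' by blast
  have "y ^ a * (x ^ a * f) = f" "x ^ b * (y ^ b * f) = f"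
    using left_right_inverse_power[OF xy(2)] left_right_inverse_power[OF xy(1)]
    by (simp_all add: mult.assoc[symmetric])
  then have "x ^ a * f \<noteq> 0" "y ^ b * f \<noteq> 0" using f(3) by auto
  have "\<exists>F. finite F \<and> (\<forall>b\<in>range (zpow x y). g * b \<in> span_plus_ideal F)" for g
  proof -
    obtain F1 where "finite F1" "\<And>n. g * x ^ n \<in> span_plus_ideal F1"
      using powers_mult_in_span_plus_ideal_finite[OF ideal_left_mult[OF f(1)] a \<open>x ^ a * f \<noteq> 0\<close>]
      by blast
    moreover obtain F2 where "finite F2" "\<And>n. g * y ^ n \<in> span_plus_ideal F2"
      using powers_mult_in_span_plus_ideal_finite[OF ideal_left_mult[OF f(1)] b \<open>y ^ b * f \<noteq> 0\<close>]
      by blast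
    ultimately show ?thesis
      using span_plus_ideal_mono[of F1 "F1 \<union> F2"] span_plus_ideal_mono[of F2 "F1 \<union> F2"]
      by (intro exI[of _ "F1 \<union> F2"]) (auto simp: zpow_def)
  qed
  then show ?thesis by (rule finite_codim_if_mult_span[OF assms(2) equalityD1[OF P]])
qed

lemma ideal_meets_subalg_if_finite_codim:
  assumes "is_poly_subalg scale P x \<or> is_laurent_subalg scale P x" "finite_codim scale I"
  shows "I \<inter> P \<noteq> {0}"
proof -
  note powers = independent_powers_in_subalg[OF assms(1)]
  obtain F where F: "finite F" "span_plus_ideal F = UNIV"
    using assms(2) unfolding finite_codim_iff by blast
  have "infinite (range (\<lambda>n::nat. x ^ n))"
    using finite_imageD[of "\<lambda>n::nat. x ^ n" UNIV] powers by auto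
  then have "\<not> span (range (\<lambda>n::nat. x ^ n)) \<inter> I \<subseteq> {0}"
    using independent_card_le_codim[OF F] powers by blast
  then show ?thesis using powers by blast
qed

end

theorem lemma2p7:
  fixes scale :: "'k::field \<Rightarrow> 'h::ring_1 \<Rightarrow> 'h"
    and \<Delta> :: "'h \<Rightarrow> ('h \<times> 'h) list" and \<epsilon> :: "'h \<Rightarrow> 'k" and S :: "'h \<Rightarrow> 'h"
    and P :: "'h set" and x :: 'h and I :: "'h set"
  assumes "hopf_algebra scale \<Delta> \<epsilon> S"
    and "is_poly_subalg scale P x \<or> is_laurent_subalg scale P x"
    and "fg_right_module P"
    and "left_ideal scale I"
  shows "finite_codim scale I \<longleftrightarrow> I \<inter> P \<noteq> {0}"
proof -
  have "k_algebra scale"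
    using assms(1) unfolding hopf_algebra_def by (rule conjunct1)
  then interpret ring_vector_space_ideal scale I
    using assms(4) unfolding k_algebra_def ring_vector_space_ideal_def ring_vector_space_def
      ring_vector_space_axioms_def ring_vector_space_ideal_axioms_def by blast
  show ?thesis
  proof
    assume "finite_codim scale I"
    then show "I \<inter> P \<noteq> {0}" by (rule ideal_meets_subalg_if_finite_codim[OF assms(2)])
  next
    assume "I \<inter> P \<noteq> {0}"
    then show "finite_codim scale I"
      using assms(2) finite_codim_if_poly_subalg[OF _ assms(3)]
        finite_codim_if_laurent_subalg[OF _ assms(3)] by blast
  qed
qed

end
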